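(* Let $\mu$ be a measure on $\mathbb R$ with infinite support and finite moments $m_k(\mu)=\int t^k\,d\mu(t)$, $k\ge0$. Let $a_n\in\mathbb R_{>0}$ and $b_n\in\mathbb R$ ($n\ge1$) be such that the $n$-th approximant $w_n(z)$ of the continued fraction $\cfrac{a_1}{z+b_1-\cfrac{a_2}{z+b_2-\cfrac{a_3}{z+b_3-\cdots}}}$ satisfies $w_n(z)-\sum_{k=0}^{2n-1}\frac{m_k(\mu)}{z^{k+1}}=o(z^{-2n})$ $(z\to\infty)$ for every $n\ge1$. Let $f(z)$ be a complex-valued function defined on an unbounded subset $\mathfrak X$ of $\mathbb C\cup\{\infty\}$. Then the following are equivalent: (i) $f(z)\sim\sum_{k=0}^\infty\frac{m_k(\mu)}{z^{k+1}}$ $(z\to\infty)_{\mathfrak X}$; (ii) $f(z)\sim\cfrac{a_1}{z+b_1-\cfrac{a_2}{z+b_2-\cfrac{a_3}{z+b_3-\cdots}}}$ $(z\to\infty)_{\mathfrak X}$; (iii) for every $n\ge1$, $f(z)=\cfrac{a_1}{z+b_1-\cfrac{a_2}{\ddots-\cfrac{a_n}{z+b_n-f_n(z)}}}$ for some $f_n$ with $f_n(z)\sim\frac{a_{n+1}}{z}$ $(z\to\infty)_{\mathfrak X}$; (iv) $f(z)-w_n(z)\sim\frac{a_1\cdots a_{n+1}}{z^{2n+1}}$ $(z\to\infty)_{\mathfrak X}$ for all $n\ge0$; (v) $f(z)-w_n(z)=O(z^{-(2n+1)})$ $(z\to\infty)_{\mathfrak X}$ for all $n\ge0$; (vi) $f(z)-w_n(z)=O(z^{-(2n+1)})$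 $(z\to\infty)_{\mathfrak X}$ for infinitely many $n\ge0$; (vii) for every $n\ge0$, $w_n$ is the unique rational function of degree at most $n$ with $f(z)-w(z)=O(z^{-(2n+1)})$ $(z\to\infty)_{\mathfrak X}$; (viii) for every $n\ge1$, $w_n$ is the unique Padé approximant of $f$ over $\mathfrak X$ at $\infty$ of order $[n-1,n]$. In particular, for all $\delta,\varepsilon>0$ the Stieltjes transform $\mathcal S_\mu(z)=\int\frac{d\mu(t)}{z-t}$ satisfies $\mathcal S_\mu(z)\sim\cfrac{a_1}{z+b_1-\cfrac{a_2}{z+b_2-\cdots}}$ $(z\to\infty)_{\mathbb C_{\delta,\varepsilon}}$ over $\mathbb C_{\delta,\varepsilon}=\{z\in\mathbb C:\delta\le|\operatorname{Arg}(z)|\le\pi-\varepsilon\}$.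
   Context: Known fact (Stieltjes/Jacobi theory): for such $\mu$ sequences $a_n>0$, $b_n\in\mathbb R$ as described exist. Asymptotic relations as $z\to\infty$ within $\mathfrak X$: $O$, $o$, $\sim$ on punctured neighbourhoods of $\infty$ intersected with $\mathfrak X$. $f\sim\sum_k c_k/z^{k+1}$ means $f-\sum_{k=0}^n c_k/z^{k+1}=o(z^{-(n+1)})$ for all $n$. For a continued fraction with approximants $v_m$ ($v_0=0$), $f\sim K$ means $\{v_m-v_{m-1}\}_{m\ge1}$ is an asymptotic sequence and $f-v_m=O(v_{m+1}-v_m)$ for all $m\ge0$. Degree of a rational function: max of degrees of numerator and denominator in lowest terms. Padé approximant of order $[n-1,n]$ at $\infty$: the unique $g/h$, $\deg g\le n-1$, $0\ne h$, $\deg h\le n$, with $f-g/h=O(z^{-(2n+1)})$ $(z\to\infty)_{\mathfrak X}$. *)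

theory Defs
  imports "HOL-Analysis.Analysis" "HOL-Library.Landau_Symbols"
    "HOL-Computational_Algebra.Computational_Algebra"
    "HOL-Computational_Algebra.Fraction_Field"
begin

definition at_inf_within :: "complex set \<Rightarrow> complex filter" where
  "at_inf_within X = inf at_infinity (principal X)"

text \<open>Generic continued-fraction block (over any field):
  jfrac a b k n z t = a(k+1)/(z+b(k+1) - a(k+2)/( ... - a(k+n)/(z+b(k+n) - t))),
  and jfrac a b k 0 z t = t.\<close>
fun jfrac :: "(nat \<Rightarrow> 'a::field) \<Rightarrow> (nat \<Rightarrow> 'a) \<Rightarrow> nat \<Rightarrow> nat \<Rightarrow> 'a \<Rightarrow> 'a \<Rightarrow> 'a" where
  "jfrac a b k 0 z t = t"
| "jfrac a b k (Suc n) z t = a (Suc k) / (z + b (Suc k) - jfrac a b (Suc k) n z t)"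

definition wapp :: "(nat \<Rightarrow> real) \<Rightarrow> (nat \<Rightarrow> real) \<Rightarrow> nat \<Rightarrow> complex \<Rightarrow> complex" where
  "wapp a b n z = jfrac (\<lambda>k. complex_of_real (a k)) (\<lambda>k. complex_of_real (b k)) 0 n z 0"

definition wrat :: "(nat \<Rightarrow> real) \<Rightarrow> (nat \<Rightarrow> real) \<Rightarrow> nat \<Rightarrow> complex poly fract" where
  "wrat a b n = jfrac (\<lambda>k. to_fract [:complex_of_real (a k):]) (\<lambda>k. to_fract [:complex_of_real (b k):])
      0 n (to_fract [:0, 1:]) 0"

definition rdeg :: "complex poly fract \<Rightarrow> nat" where
  "rdeg r = (THE d. \<exists>p q. q \<noteq> 0 \<and> coprime p q \<and> r = to_fract p / to_fract q
                        \<and> d = max (degree p) (degree q))"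

text \<open>Evaluation of a rational function (via a representation in lowest terms;
  at poles Isabelle's convention x/0 = 0 applies, irrelevant for asymptotics).\<close>
definition reval :: "complex poly fract \<Rightarrow> complex \<Rightarrow> complex" where
  "reval r z = (THE v. \<exists>p q. q \<noteq> 0 \<and> coprime p q \<and> r = to_fract p / to_fract q
                        \<and> v = poly p z / poly q z)"

definition asymp_series :: "complex filter \<Rightarrow> (complex \<Rightarrow> complex) \<Rightarrow> (nat \<Rightarrow> complex) \<Rightarrow> bool" where
  "asymp_series F f c \<longleftrightarrow>
     (\<forall>n. (\<lambda>z. f z - (\<Sum>k\<le>n. c k / z ^ (k+1))) \<in> o[F](\<lambda>z. inverse (z ^ (n+1))))"

definition asymp_cf :: "complex filter \<Rightarrow> (complex \<Rightarrow> complex) \<Rightarrow> (nat \<Rightarrow> complex \<Rightarrow> complex) \<Rightarrow> bool" where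
  "asymp_cf F f v \<longleftrightarrow>
     (\<forall>m. (\<lambda>z. v (m+2) z - v (m+1) z) \<in> o[F](\<lambda>z. v (m+1) z - v m z)) \<and>
     (\<forall>m. (\<lambda>z. f z - v m z) \<in> O[F](\<lambda>z. v (Suc m) z - v m z))"

definition msupport :: "real measure \<Rightarrow> real set" where
  "msupport \<mu> = {x. \<forall>e>0. emeasure \<mu> {x - e <..< x + e} > 0}"

definition moment :: "real measure \<Rightarrow> nat \<Rightarrow> real" where
  "moment \<mu> k = integral\<^sup>L \<mu> (\<lambda>t. t ^ k)"

definition stieltjes :: "real measure \<Rightarrow> complex \<Rightarrow> complex" where
  "stieltjes \<mu> z = integral\<^sup>L \<mu> (\<lambda>t. 1 / (z - complex_of_real t))"

end

theory Submission
  imports Defs "HOL-Computational_Algebra.Field_as_Ring"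
begin

(* Everything is measured against (v): f - w_n = O(z^-(2n+1)) for every n.
   Perturbing the innermost tail of the finite continued fraction gives
   w_(n+1) - w_n ~ a_1 ... a_(n+1) / z^(2n+1); hence the differences form an asymptotic
   sequence, and (ii), (iv) and (vi) become restatements of (v).  For (iii) the tail f_n
   is recovered from f by inverting the first n levels of the fraction, each level costing
   exactly two powers of z.  Uniqueness in (vii) and (viii) holds because two rational
   functions of degree at most n that agree up to O(z^-(2n+1)) have a cross difference
   which is a polynomial tending to 0.  (i) is equivalent to (v) by the assumed moment
   expansion of w_n, and the Stieltjes transform satisfies (i) on every region where
   |Im z| >= kappa |z|, in particular on the sector. *)

section \<open>Asymptotics at infinity\<close>

lemma eventually_nonzero_le_at_infinity:
  fixes F :: "'a::real_normed_vector filter"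
  assumes "F \<le> at_infinity"
  shows "eventually (\<lambda>z. z \<noteq> 0) F"
  using eventually_not_equal_at_infinity assms filter_leD by blast

lemma filterlim_ident_at_infinity:
  "F \<le> at_infinity \<Longrightarrow> filterlim (\<lambda>z. z) at_infinity F"
  by (simp add: filterlim_def)

lemma tendsto_divide_ident_0:
  fixes c :: "'a::real_normed_field"
  assumes "F \<le> at_infinity"
  shows "((\<lambda>z. c / z) \<longlongrightarrow> 0) F"
  by (rule tendsto_divide_0[OF tendsto_const filterlim_ident_at_infinity[OF assms]])

lemma inverse_power_smallo:
  fixes F :: "'a::real_normed_field filter"
  assumes "q < p" "F \<le> at_infinity"
  shows "(\<lambda>z. inverse (z ^ p)) \<in> o[F](\<lambda>z. inverse (z ^ q))"
proof (rule smalloI_tendsto)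
  have "((\<lambda>z. inverse z ^ (p - q)) \<longlongrightarrow> 0 ^ (p - q)) F"
    using tendsto_mono[OF assms(2) tendsto_inverse_0] by (rule tendsto_power)
  then have "((\<lambda>z. inverse z ^ (p - q)) \<longlongrightarrow> 0) F"
    using assms(1) by (simp add: power_0_left)
  moreover have "eventually (\<lambda>z. inverse z ^ (p - q) = inverse (z ^ p) / inverse (z ^ q)) F"
    using eventually_nonzero_le_at_infinity[OF assms(2)]
    by eventually_elim (use assms(1) in \<open>simp add: power_diff field_simps flip: power_inverse\<close>)
  ultimately show "((\<lambda>z. inverse (z ^ p) / inverse (z ^ q)) \<longlongrightarrow> 0) F"
    by (rule Lim_transform_eventually)
  show "eventually (\<lambda>z. inverse (z ^ q) \<noteq> 0) F"
    using eventually_nonzero_le_at_infinity[OF assms(2)] by eventually_elim simp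
qed

lemma inverse_power_bigo:
  fixes F :: "'a::real_normed_field filter"
  assumes "q \<le> p" "F \<le> at_infinity"
  shows "(\<lambda>z. inverse (z ^ p)) \<in> O[F](\<lambda>z. inverse (z ^ q))"
  using assms inverse_power_smallo[of q p F] by (cases "q = p") (auto intro: landau_o.small_imp_big)

lemma bigo_inverse_power_weaken:
  fixes F :: "'a::real_normed_field filter"
  assumes "f \<in> O[F](\<lambda>z. inverse (z ^ p))" "q \<le> p" "F \<le> at_infinity"
  shows "f \<in> O[F](\<lambda>z. inverse (z ^ q))"
  using assms(1) inverse_power_bigo[OF assms(2,3)] by (rule landau_o.big_trans)

lemma bigo_inverse_power_imp_smallo:
  fixes F :: "'a::real_normed_field filter"
  assumes "f \<in> O[F](\<lambda>z. inverse (z ^ p))" "q < p" "F \<le> at_infinity"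
  shows "f \<in> o[F](\<lambda>z. inverse (z ^ q))"
  using assms(1) inverse_power_smallo[OF assms(2,3)] by (rule landau_o.big_small_trans)

lemma const_divide_power_bigo:
  fixes c :: "'a::real_normed_field"
  shows "(\<lambda>z. c / z ^ m) \<in> O[F](\<lambda>z. inverse (z ^ m))"
  by (cases "c = 0") (simp_all add: divide_inverse)

lemma const_divide_power_bigtheta:
  fixes c :: "'a::real_normed_field"
  assumes "c \<noteq> 0"
  shows "(\<lambda>z. c / z ^ m) \<in> \<Theta>[F](\<lambda>z. inverse (z ^ m))"
  using assms by (simp add: divide_inverse)

lemma smallo_if_bigo_inverse_power:
  fixes F :: "'a::real_normed_field filter"
  assumes "q < p" "F \<le> at_infinity" "g \<in> \<Theta>[F](\<lambda>z. inverse (z ^ q))"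
    and "e \<in> O[F](\<lambda>z. inverse (z ^ p))"
  shows "e \<in> o[F](g)"
  using bigo_inverse_power_imp_smallo[OF assms(4,1,2)] assms(3)
  by (rule landau_o.small.bigtheta_trans1')

lemma asymp_equiv_if_bigo_inverse_power:
  fixes F :: "'a::real_normed_field filter"
  assumes "q < p" "F \<le> at_infinity" "g \<in> \<Theta>[F](\<lambda>z. inverse (z ^ q))"
    and "(\<lambda>z. h z - g z) \<in> O[F](\<lambda>z. inverse (z ^ p))"
  shows "h \<sim>[F] g"
  using smallo_if_bigo_inverse_power[OF assms] by (rule smallo_imp_asymp_equiv)

lemma asymp_equiv_ident_plus_tendsto:
  fixes g :: "'a::real_normed_field \<Rightarrow> 'a"
  assumes "F \<le> at_infinity" "(g \<longlongrightarrow> c) F"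
  shows "(\<lambda>z. z + g z) \<sim>[F] (\<lambda>z. z)"
proof -
  have "g \<in> o[F](\<lambda>z. z)"
  proof (rule smalloI_tendsto)
    show "((\<lambda>z. g z / z) \<longlongrightarrow> 0) F"
      by (rule tendsto_divide_0[OF assms(2) filterlim_ident_at_infinity[OF assms(1)]])
  qed (rule eventually_nonzero_le_at_infinity[OF assms(1)])
  then show ?thesis by (subst asymp_equiv_add_right) auto
qed

lemma partial_sum_diff_bigo:
  fixes c :: "nat \<Rightarrow> 'a::real_normed_field"
  assumes F: "F \<le> at_infinity" and "n \<le> N"
  shows "(\<lambda>z. (\<Sum>k\<le>N. c k / z ^ (k+1)) - (\<Sum>k\<le>n. c k / z ^ (k+1))) \<in> O[F](\<lambda>z. inverse (z ^ (n+2)))"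
  using assms(2)
proof (induction N rule: dec_induct)
  case base
  show ?case
    by simp
next
  case (step N)
  have "(\<lambda>z. c (Suc N) / z ^ (Suc N + 1)) \<in> O[F](\<lambda>z. inverse (z ^ (n+2)))"
    by (rule bigo_inverse_power_weaken[OF const_divide_power_bigo _ F]) (use step(1) in simp)
  from sum_in_bigo(1)[OF step(3) this] show ?case
    by (simp add: algebra_simps)
qed

lemma at_inf_within_le_at_infinity [simp]: "at_inf_within X \<le> at_infinity"
  by (simp add: at_inf_within_def)

lemma eventually_at_inf_within:
  "eventually P (at_inf_within X) \<longleftrightarrow> eventually (\<lambda>z. z \<in> X \<longrightarrow> P z) at_infinity"
  by (simp add: at_inf_within_def eventually_inf_principal)

lemma at_inf_within_eq_bot_iff [simp]: "at_inf_within X = bot \<longleftrightarrow> bounded X"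
proof -
  have "at_inf_within X = bot \<longleftrightarrow> (\<exists>B. \<forall>z. B \<le> norm z \<longrightarrow> z \<notin> X)"
    by (simp add: eventually_False [symmetric] eventually_at_inf_within eventually_at_infinity)
  also have "\<dots> \<longleftrightarrow> bounded X"
    unfolding bounded_iff by (meson gt_ex le_less_trans less_le_not_le linear)
  finally show ?thesis .
qed

section \<open>Polynomials and rational functions\<close>

lemma eventually_poly_nonzero_at_infinity:
  fixes p :: "'a::real_normed_field poly"
  assumes "p \<noteq> 0"
  shows "eventually (\<lambda>z. poly p z \<noteq> 0) at_infinity"
proof -
  have "eventually (\<lambda>z. poly p z / z ^ degree p \<noteq> 0) at_infinity"
    by (rule tendsto_imp_eventually_ne[OF poly_divide_tendsto_aux]) (use assms in simp)
  then show ?thesis by eventually_elim auto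
qed

lemma poly_bigo_power:
  fixes p :: "'a::real_normed_field poly"
  assumes "F \<le> at_infinity" "degree p \<le> m"
  shows "poly p \<in> O[F](\<lambda>z. z ^ m)"
proof -
  have "poly p \<in> O[at_infinity](\<lambda>z. z ^ degree p)"
  proof (rule bigoI_tendsto)
    show "eventually (\<lambda>z::'a. z ^ degree p \<noteq> 0) at_infinity"
      using eventually_nonzero_le_at_infinity[OF order_refl] by eventually_elim simp
  qed (rule poly_divide_tendsto_aux)
  also have "(\<lambda>z. z ^ degree p) \<in> O[at_infinity](\<lambda>z::'a. z ^ m)"
  proof (rule landau_o.bigI[of 1])
    show "eventually (\<lambda>z::'a. norm (z ^ degree p) \<le> 1 * norm (z ^ m)) at_infinity"
      using assms(2) by (auto simp: eventually_at_infinity norm_power intro!: exI[of _ 1] power_increasing)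
  qed simp
  finally show ?thesis by (rule landau_o.big.filter_mono[OF assms(1)])
qed

lemma poly_eq_0_if_tendsto_0:
  fixes p :: "'a::real_normed_field poly"
  assumes "F \<le> at_infinity" "F \<noteq> bot" "(poly p \<longlongrightarrow> 0) F"
  shows "p = 0"
proof -
  have "((\<lambda>z. poly p z * inverse z ^ degree p) \<longlongrightarrow> 0 * 0 ^ degree p) F"
    using assms(3) tendsto_mono[OF assms(1) tendsto_inverse_0] by (intro tendsto_intros)
  moreover have "((\<lambda>z. poly p z * inverse z ^ degree p) \<longlongrightarrow> lead_coeff p) F"
    using tendsto_mono[OF assms(1) poly_divide_tendsto_aux[of p]]
    by (simp add: divide_inverse power_inverse)
  ultimately have "lead_coeff p = 0"
    using tendsto_unique[OF assms(2)] by fastforce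
  then show ?thesis by simp
qed

lemma poly_cross_eq_if_bigo:
  fixes g1 h1 g2 h2 :: "'a::real_normed_field poly"
  assumes F: "F \<le> at_infinity" "F \<noteq> bot" and h: "h1 \<noteq> 0" "h2 \<noteq> 0"
    and deg: "degree h1 + degree h2 \<le> m"
    and bigo: "(\<lambda>z. poly g1 z / poly h1 z - poly g2 z / poly h2 z) \<in> O[F](\<lambda>z. inverse (z ^ (m+1)))"
  shows "g1 * h2 = g2 * h1"
proof -
  define p where "p = g1 * h2 - g2 * h1"
  have "eventually (\<lambda>z. poly h1 z \<noteq> 0 \<and> poly h2 z \<noteq> 0 \<and> z \<noteq> 0) F"
    using filter_leD[OF F(1) eventually_poly_nonzero_at_infinity[OF h(1)]]
      filter_leD[OF F(1) eventually_poly_nonzero_at_infinity[OF h(2)]]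
      eventually_nonzero_le_at_infinity[OF F(1)]
    by eventually_elim simp
  then have ev: "eventually (\<lambda>z. (poly g1 z / poly h1 z - poly g2 z / poly h2 z) * poly (h1 * h2) z
      = poly p z) F" "eventually (\<lambda>z. inverse (z ^ (m+1)) * z ^ m = inverse (z ^ 1)) F"
    by (eventually_elim, simp add: p_def field_simps)+
  have "(\<lambda>z. (poly g1 z / poly h1 z - poly g2 z / poly h2 z) * poly (h1 * h2) z)
      \<in> O[F](\<lambda>z. inverse (z ^ (m+1)) * z ^ m)"
    using bigo poly_bigo_power[OF F(1) order_trans[OF degree_mult_le deg]]
    by (rule landau_o.big.mult)
  then have "poly p \<in> O[F](\<lambda>z. inverse (z ^ 1))"
    unfolding landau_o.big.in_cong[OF ev(1)] landau_o.big.cong[OF ev(2)] .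
  then have "poly p \<in> o[F](\<lambda>z. inverse (z ^ 0))"
    by (rule bigo_inverse_power_imp_smallo) (simp_all add: F(1))
  then have "(poly p \<longlongrightarrow> 0) F"
    by (auto dest: smalloD_tendsto)
  then have "p = 0"
    by (rule poly_eq_0_if_tendsto_0[OF F])
  then show ?thesis
    by (simp add: p_def)
qed

lemma divide_to_fract_eq_iff:
  fixes g h p q :: "'a::idom"
  assumes "h \<noteq> 0" "q \<noteq> 0"
  shows "to_fract g / to_fract h = to_fract p / to_fract q \<longleftrightarrow> g * q = p * h"
  using assms by (simp add: frac_eq_eq flip: to_fract_mult)

lemma coprime_fract_repr_exists:
  fixes r :: "'a::field_gcd poly fract"
  shows "\<exists>p q. q \<noteq> 0 \<and> coprime p q \<and> r = to_fract p / to_fract q"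
proof (intro exI conjI)
  show "snd (quot_of_fract r) \<noteq> 0" "coprime (fst (quot_of_fract r)) (snd (quot_of_fract r))"
    by (simp_all add: coprime_quot_of_fract)
  show "r = to_fract (fst (quot_of_fract r)) / to_fract (snd (quot_of_fract r))"
    using Fract_quot_of_fract[of r] by (simp add: Fract_conv_to_fract)
qed

lemma coprime_fract_repr_dvd:
  fixes p q p' q' :: "'a::field_gcd poly"
  assumes "q \<noteq> 0" "q' \<noteq> 0" "coprime p q"
    and "to_fract p / to_fract q = to_fract p' / to_fract q'"
  shows "p dvd p'" "q dvd q'"
proof -
  have eq: "p * q' = p' * q"
    using assms by (simp add: divide_to_fract_eq_iff)
  then show "p dvd p'"
    using coprime_dvd_mult_left_iff[OF assms(3), of p'] by (metis dvd_triv_left)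
  show "q dvd q'"
    using eq coprime_dvd_mult_right_iff[of q p q'] assms(3) by (simp add: coprime_commute)
qed

lemma degree_eq_if_dvd_dvd: "p dvd q \<Longrightarrow> q dvd p \<Longrightarrow> degree p = degree (q :: 'a::idom poly)"
  by (metis dvd_0_left_iff dvd_imp_degree_le le_antisym)

lemma coprime_fract_repr_unique:
  fixes p q p' q' :: "'a::field_gcd poly"
  assumes q: "q \<noteq> 0" "coprime p q" and q': "q' \<noteq> 0" "coprime p' q'"
    and eq: "to_fract p / to_fract q = to_fract p' / to_fract q'"
  shows "max (degree p') (degree q') = max (degree p) (degree q)"
    and "poly p' z / poly q' z = poly p z / poly q z"
proof -
  note dvd = coprime_fract_repr_dvd[OF q(1) q'(1) q(2) eq] coprime_fract_repr_dvd[OF q'(1) q(1) q'(2) eq [symmetric]]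
  then show "max (degree p') (degree q') = max (degree p) (degree q)"
    using degree_eq_if_dvd_dvd by metis
  obtain u v where u: "q' = q * u" and v: "q = q' * v"
    using dvd(2,4) by (elim dvdE)
  have "poly q' z = poly q z * poly u z"
    using u by simp
  moreover have "poly q z = poly q' z * poly v z"
    using v by simp
  ultimately have "poly q' z = 0 \<longleftrightarrow> poly q z = 0"
    by auto
  moreover have "poly p z * poly q' z = poly p' z * poly q z"
    using eq q(1) q'(1) by (simp add: divide_to_fract_eq_iff flip: poly_mult)
  ultimately show "poly p' z / poly q' z = poly p z / poly q z"
    by (cases "poly q z = 0") (simp_all add: frac_eq_eq)
qed

lemma rdeg_reval_coprime:
  fixes p q :: "complex poly"
  assumes q: "q \<noteq> 0" and cop: "coprime p q" and r: "r = to_fract p / to_fract q"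
  shows "rdeg r = max (degree p) (degree q)" and "reval r z = poly p z / poly q z"
proof -
  show "rdeg r = max (degree p) (degree q)"
    unfolding rdeg_def
  proof (rule the_equality)
    fix d
    assume "\<exists>p' q'. q' \<noteq> 0 \<and> coprime p' q' \<and> r = to_fract p' / to_fract q'
        \<and> d = max (degree p') (degree q')"
    then show "d = max (degree p) (degree q)"
      using coprime_fract_repr_unique(1)[OF q cop] r by auto
  qed (use assms in blast)
  show "reval r z = poly p z / poly q z"
    unfolding reval_def
  proof (rule the_equality)
    fix v
    assume "\<exists>p' q'. q' \<noteq> 0 \<and> coprime p' q' \<and> r = to_fract p' / to_fract q'
        \<and> v = poly p' z / poly q' z"
    then show "v = poly p z / poly q z"
      using coprime_fract_repr_unique(2)[OF q cop] r by auto
  qed (use assms in blast)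
qed

lemma rdeg_reval_le:
  fixes P Q :: "complex poly"
  assumes Q: "Q \<noteq> 0" and r: "r = to_fract P / to_fract Q"
  shows "rdeg r \<le> max (degree P) (degree Q)"
    and "poly Q z \<noteq> 0 \<Longrightarrow> reval r z = poly P z / poly Q z"
proof -
  define d where "d = gcd P Q"
  define p where "p = P div d"
  define q where "q = Q div d"
  have P: "P = p * d" and Q': "Q = q * d"
    by (simp_all add: p_def q_def d_def)
  have "d \<noteq> 0" "q \<noteq> 0"
    using Q Q' by auto
  have cop: "coprime p q"
    unfolding p_def q_def d_def using Q by (intro div_gcd_coprime) simp
  have r': "r = to_fract p / to_fract q"
    using r \<open>d \<noteq> 0\<close> \<open>q \<noteq> 0\<close> by (simp add: P Q')
  have "degree p \<le> degree P"
    using \<open>d \<noteq> 0\<close> by (cases "p = 0") (simp_all add: P degree_mult_eq)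
  moreover have "degree q \<le> degree Q"
    using \<open>d \<noteq> 0\<close> \<open>q \<noteq> 0\<close> by (simp add: Q' degree_mult_eq)
  ultimately show "rdeg r \<le> max (degree P) (degree Q)"
    using rdeg_reval_coprime(1)[OF \<open>q \<noteq> 0\<close> cop r'] by linarith
  assume "poly Q z \<noteq> 0"
  then show "reval r z = poly P z / poly Q z"
    using rdeg_reval_coprime(2)[OF \<open>q \<noteq> 0\<close> cop r'] by (simp add: P Q')
qed

section \<open>Finite continued fractions\<close>

lemma jfrac_add: "jfrac a b k (n + m) z t = jfrac a b k n z (jfrac a b (k + n) m z t)"
  by (induction n arbitrary: k) simp_all

fun jtail :: "(nat \<Rightarrow> 'a::field) \<Rightarrow> (nat \<Rightarrow> 'a) \<Rightarrow> nat \<Rightarrow> nat \<Rightarrow> 'a \<Rightarrow> 'a \<Rightarrow> 'a" where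
  "jtail a b k 0 z v = v"
| "jtail a b k (Suc n) z v = jtail a b (Suc k) n z (z + b (Suc k) - a (Suc k) / v)"

lemma jfrac_jtail:
  assumes "\<And>i. a (Suc i) \<noteq> 0"
  shows "jfrac a b k n z (jtail a b k n z v) = v"
  using assms by (induction n arbitrary: k v) simp_all

(* Nothing is assumed about x * q - p: if it vanishes, both sides are 0 by x / 0 = 0. *)
lemma divide_diff_divide_eq:
  fixes c x p q :: "'a::field"
  assumes "q \<noteq> 0"
  shows "c / (x - p / q) = c * q / (x * q - p)"
proof -
  have "x - p / q = (x * q - p) / q"
    using assms by (simp add: field_simps)
  then show ?thesis
    by simp
qed

lemma monic_degree_linear_mult_diff:
  fixes P Q :: "'a::idom poly"
  assumes Q: "lead_coeff Q = 1" "degree Q = n" and P: "P = 0 \<or> degree P < n"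
  shows "lead_coeff ([:c, 1:] * Q - P) = 1" "degree ([:c, 1:] * Q - P) = Suc n"
proof -
  define X where "X = [:c, 1:]"
  have "X \<noteq> 0" "degree X = 1" "lead_coeff X = 1" "Q \<noteq> 0"
    using Q by (auto simp: X_def)
  then have XQ: "degree (X * Q) = Suc n" "lead_coeff (X * Q) = 1"
    using Q by (simp add: degree_mult_eq, simp only: lead_coeff_mult, simp)
  have deg_P: "degree (- P) < degree (X * Q)"
    using P XQ by auto
  have "lead_coeff (- P + X * Q) = 1" "degree (- P + X * Q) = Suc n"
    using lead_coeff_add_le[OF deg_P] degree_add_eq_right[OF deg_P] XQ by simp_all
  then show "lead_coeff ([:c, 1:] * Q - P) = 1" "degree ([:c, 1:] * Q - P) = Suc n"
    by (simp_all add: X_def [symmetric])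
qed

lemma jfrac_fract_repr:
  fixes \<alpha> \<beta> :: "nat \<Rightarrow> 'a::real_normed_field"
  shows "\<exists>P Q. jfrac (\<lambda>k. to_fract [:\<alpha> k:]) (\<lambda>k. to_fract [:\<beta> k:]) k n (to_fract [:0, 1:]) 0
      = to_fract P / to_fract Q
    \<and> lead_coeff Q = 1 \<and> degree Q = n \<and> (P = 0 \<or> degree P < n)
    \<and> eventually (\<lambda>z. jfrac \<alpha> \<beta> k n z 0 = poly P z / poly Q z) at_infinity"
proof (induction n arbitrary: k)
  case 0
  show ?case
    by (intro exI[of _ 0] exI[of _ 1]) simp
next
  case (Suc n)
  then obtain P Q where
    fract: "jfrac (\<lambda>k. to_fract [:\<alpha> k:]) (\<lambda>k. to_fract [:\<beta> k:]) (Suc k) n (to_fract [:0, 1:]) 0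
      = to_fract P / to_fract Q"
    and Q: "lead_coeff Q = 1" "degree Q = n" and P: "P = 0 \<or> degree P < n"
    and ev: "eventually (\<lambda>z. jfrac \<alpha> \<beta> (Suc k) n z 0 = poly P z / poly Q z) at_infinity"
    by blast
  define X where "X = [:\<beta> (Suc k), 1:]"
  define P' where "P' = smult (\<alpha> (Suc k)) Q"
  have "Q \<noteq> 0"
    using Q by auto
  have "lead_coeff (X * Q - P) = 1" "degree (X * Q - P) = Suc n"
    unfolding X_def by (rule monic_degree_linear_mult_diff[OF Q P])+
  moreover have "P' = 0 \<or> degree P' < Suc n"
    using Q by (simp add: P'_def)
  moreover have "jfrac (\<lambda>k. to_fract [:\<alpha> k:]) (\<lambda>k. to_fract [:\<beta> k:]) k (Suc n) (to_fract [:0, 1:]) 0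
      = to_fract P' / to_fract (X * Q - P)"
  proof -
    have "to_fract [:0, 1:] + to_fract [:\<beta> (Suc k):] = to_fract X"
      by (simp add: X_def flip: to_fract_add)
    moreover have "to_fract P' = to_fract [:\<alpha> (Suc k):] * to_fract Q"
      by (simp add: P'_def flip: to_fract_mult)
    ultimately show ?thesis
      using fract \<open>Q \<noteq> 0\<close> by (simp add: divide_diff_divide_eq)
  qed
  moreover have "eventually (\<lambda>z. jfrac \<alpha> \<beta> k (Suc n) z 0 = poly P' z / poly (X * Q - P) z) at_infinity"
    using ev eventually_poly_nonzero_at_infinity[OF \<open>Q \<noteq> 0\<close>]
    by eventually_elim (simp add: divide_diff_divide_eq P'_def X_def algebra_simps)
  ultimately show ?case
    by blast
qed

lemma jfrac_tendsto_0:
  fixes a b :: "nat \<Rightarrow> 'a::real_normed_field"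
  assumes "F \<le> at_infinity" "(t \<longlongrightarrow> 0) F"
  shows "((\<lambda>z. jfrac a b k n z (t z)) \<longlongrightarrow> 0) F"
proof (induction n arbitrary: k)
  case 0
  show ?case
    using assms(2) by simp
next
  case (Suc n)
  have "((\<lambda>z. b (Suc k) - jfrac a b (Suc k) n z (t z)) \<longlongrightarrow> b (Suc k) - 0) F"
    by (intro tendsto_diff tendsto_const Suc.IH)
  then have "filterlim (\<lambda>z. z + (b (Suc k) - jfrac a b (Suc k) n z (t z))) at_infinity F"
    by (rule tendsto_add_filterlim_at_infinity'[OF filterlim_ident_at_infinity[OF assms(1)]])
  from tendsto_divide_0[OF tendsto_const this]
  show ?case
    by (simp add: add_diff_eq)
qed

lemma jfrac_denominator_asymp_equiv:
  fixes a b :: "nat \<Rightarrow> 'a::real_normed_field"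
  assumes "F \<le> at_infinity" "(t \<longlongrightarrow> 0) F"
  shows "(\<lambda>z. z + b (Suc k) - jfrac a b (Suc k) n z (t z)) \<sim>[F] (\<lambda>z. z)"
  using asymp_equiv_ident_plus_tendsto[OF assms(1) tendsto_diff[OF tendsto_const jfrac_tendsto_0[OF assms]]]
  by (simp add: add_diff_eq)

lemma jfrac_Suc_asymp_equiv:
  fixes a b :: "nat \<Rightarrow> 'a::real_normed_field"
  assumes "F \<le> at_infinity" "(t \<longlongrightarrow> 0) F"
  shows "(\<lambda>z. jfrac a b k (Suc n) z (t z)) \<sim>[F] (\<lambda>z. a (Suc k) / z)"
  using asymp_equiv_divide[OF asymp_equiv_refl jfrac_denominator_asymp_equiv[OF assms]] by simp

lemma jfrac_diff_asymp_equiv: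
  fixes a b :: "nat \<Rightarrow> 'a::real_normed_field"
  assumes F: "F \<le> at_infinity" and t: "(t \<longlongrightarrow> 0) F" and s: "(s \<longlongrightarrow> 0) F"
  shows "(\<lambda>z. jfrac a b k n z (t z) - jfrac a b k n z (s z))
      \<sim>[F] (\<lambda>z. (t z - s z) * (\<Prod>i<n. a (Suc (k + i))) / z ^ (2*n))"
proof (induction n arbitrary: k)
  case 0
  show ?case
    by simp
next
  case (Suc n)
  define Dt where "Dt z = z + b (Suc k) - jfrac a b (Suc k) n z (t z)" for z
  define Ds where "Ds z = z + b (Suc k) - jfrac a b (Suc k) n z (s z)" for z
  have D: "Dt \<sim>[F] (\<lambda>z. z)" "Ds \<sim>[F] (\<lambda>z. z)"
    unfolding Dt_def Ds_def using jfrac_denominator_asymp_equiv[OF F] t s by blast+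
  have "(\<lambda>z. a (Suc k) * (jfrac a b (Suc k) n z (t z) - jfrac a b (Suc k) n z (s z)) / (Dt z * Ds z))
      \<sim>[F] (\<lambda>z. a (Suc k) * ((t z - s z) * (\<Prod>i<n. a (Suc (Suc k + i))) / z ^ (2*n)) / (z * z))"
    by (intro asymp_equiv_intros Suc.IH D)
  moreover have "eventually (\<lambda>z. Dt z \<noteq> 0 \<and> Ds z \<noteq> 0) F"
    using D[THEN asymp_equiv_eventually_zeros] eventually_nonzero_le_at_infinity[OF F]
    by eventually_elim auto
  then have "eventually (\<lambda>z. a (Suc k) * (jfrac a b (Suc k) n z (t z) - jfrac a b (Suc k) n z (s z))
      / (Dt z * Ds z) = jfrac a b k (Suc n) z (t z) - jfrac a b k (Suc n) z (s z)) F"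
  proof eventually_elim
    case (elim z)
    have "jfrac a b k (Suc n) z (t z) - jfrac a b k (Suc n) z (s z)
        = a (Suc k) / Dt z - a (Suc k) / Ds z"
      by (simp add: Dt_def Ds_def)
    also have "\<dots> = a (Suc k) * (Ds z - Dt z) / (Dt z * Ds z)"
      using elim by (simp add: field_simps)
    also have "Ds z - Dt z = jfrac a b (Suc k) n z (t z) - jfrac a b (Suc k) n z (s z)"
      by (simp add: Dt_def Ds_def)
    finally show ?case
      by simp
  qed
  moreover have "eventually (\<lambda>z. a (Suc k) * ((t z - s z) * (\<Prod>i<n. a (Suc (Suc k + i))) / z ^ (2*n))
      / (z * z) = (t z - s z) * (\<Prod>i<Suc n. a (Suc (k + i))) / z ^ (2 * Suc n)) F"
    using eventually_nonzero_le_at_infinity[OF F]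
    by eventually_elim (simp only: prod.lessThan_Suc_shift, simp add: field_simps power2_eq_square)
  ultimately show ?case
    by (rule asymp_equiv_transfer)
qed

lemma jtail_Suc_bigo:
  fixes a b :: "nat \<Rightarrow> 'a::real_normed_field"
  assumes F: "F \<le> at_infinity" and a: "a (Suc k) \<noteq> 0"
    and h: "(\<lambda>z. h z - jfrac a b k (Suc m) z 0) \<in> O[F](\<lambda>z. inverse (z ^ (2*m+3)))"
  shows "(\<lambda>z. (z + b (Suc k) - a (Suc k) / h z) - jfrac a b (Suc k) m z 0)
      \<in> O[F](\<lambda>z. inverse (z ^ (2*m+1)))"
proof -
  define D where "D z = z + b (Suc k) - jfrac a b (Suc k) m z 0" for z
  have D: "D \<sim>[F] (\<lambda>z. z)"
    unfolding D_def by (rule jfrac_denominator_asymp_equiv[OF F tendsto_const])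
  have jfrac_D: "jfrac a b k (Suc m) z 0 = a (Suc k) / D z" for z
    by (simp add: D_def)
  have aD: "(\<lambda>z. a (Suc k) / D z) \<sim>[F] (\<lambda>z. a (Suc k) / z)"
    by (intro asymp_equiv_intros D)
  have "(\<lambda>z. a (Suc k) / z) \<in> \<Theta>[F](\<lambda>z. inverse (z ^ 1))"
    using const_divide_power_bigtheta[OF a, of 1] by simp
  then have "(\<lambda>z. a (Suc k) / D z) \<in> \<Theta>[F](\<lambda>z. inverse (z ^ 1))"
    by (rule landau_theta.trans[OF asymp_equiv_imp_bigtheta[OF aD]])
  from asymp_equiv_if_bigo_inverse_power[OF _ F this h[unfolded jfrac_D]]
  have "h \<sim>[F] (\<lambda>z. a (Suc k) / z)"
    using aD by (simp add: asymp_equiv_trans)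
  then have "(\<lambda>z. D z / h z) \<sim>[F] (\<lambda>z. z / (a (Suc k) / z))"
    by (intro asymp_equiv_intros D)
  moreover have "(\<lambda>z. z / (a (Suc k) / z)) = (\<lambda>z. inverse (a (Suc k)) * z ^ 2)"
    by (simp add: field_simps power2_eq_square)
  ultimately have "(\<lambda>z. D z / h z) \<in> O[F](\<lambda>z. inverse (a (Suc k)) * z ^ 2)"
    by (metis asymp_equiv_imp_bigo)
  then have "(\<lambda>z. D z / h z) \<in> O[F](\<lambda>z. z ^ 2)"
    using a by simp
  from landau_o.big.mult[OF this h[unfolded jfrac_D]]
  have "(\<lambda>z. D z / h z * (h z - a (Suc k) / D z)) \<in> O[F](\<lambda>z. z ^ 2 * inverse (z ^ (2*m+3)))" .
  moreover have "eventually (\<lambda>z. D z / h z * (h z - a (Suc k) / D z)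
      = (z + b (Suc k) - a (Suc k) / h z) - jfrac a b (Suc k) m z 0) F"
    using asymp_equiv_eventually_zeros[OF \<open>h \<sim>[F] _\<close>] asymp_equiv_eventually_zeros[OF D]
      eventually_nonzero_le_at_infinity[OF F]
  proof eventually_elim
    case (elim z)
    then have "h z \<noteq> 0" "D z \<noteq> 0"
      using a by auto
    then have "D z / h z * (h z - a (Suc k) / D z) = D z - a (Suc k) / h z"
      by (simp add: field_simps)
    then show ?case
      by (simp add: D_def)
  qed
  moreover have "eventually (\<lambda>z. z ^ 2 * inverse (z ^ (2*m+3)) = inverse (z ^ (2*m+1))) F"
    using eventually_nonzero_le_at_infinity[OF F]
  proof eventually_elim
    case (elim z)
    have "2*m+3 = 2 + (2*m+1)"
      by simp
    then have "z ^ (2*m+3) = z ^ 2 * z ^ (2*m+1)"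
      by (simp only: power_add)
    then show ?case
      using elim by simp
  qed
  ultimately show ?thesis
    by (simp add: landau_o.big.in_cong landau_o.big.cong)
qed

lemma jtail_bigo:
  fixes a b :: "nat \<Rightarrow> 'a::real_normed_field"
  assumes F: "F \<le> at_infinity" and a: "\<And>i. a (Suc i) \<noteq> 0"
    and f: "(\<lambda>z. f z - jfrac a b k (n + m) z 0) \<in> O[F](\<lambda>z. inverse (z ^ (2*(n+m)+1)))"
  shows "(\<lambda>z. jtail a b k n z (f z) - jfrac a b (k + n) m z 0) \<in> O[F](\<lambda>z. inverse (z ^ (2*m+1)))"
  using f
proof (induction n arbitrary: k f)
  case 0
  then show ?case
    by simp
next
  case (Suc n)
  have "2 * (Suc n + m) + 1 = 2 * (n + m) + 3"
    by simp
  then have "(\<lambda>z. f z - jfrac a b k (Suc (n + m)) z 0) \<in> O[F](\<lambda>z. inverse (z ^ (2*(n+m)+3)))"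
    using Suc.prems by (simp only: add_Suc)
  from jtail_Suc_bigo[OF F a this]
  have "(\<lambda>z. (z + b (Suc k) - a (Suc k) / f z) - jfrac a b (Suc k) (n + m) z 0)
      \<in> O[F](\<lambda>z. inverse (z ^ (2*(n+m)+1)))" .
  from Suc.IH[OF this] show ?case
    by simp
qed

section \<open>Approximants of the J-fraction\<close>

context
  fixes a b :: "nat \<Rightarrow> real"
begin

abbreviation (input) \<alpha> :: "nat \<Rightarrow> complex" where "\<alpha> \<equiv> \<lambda>k. complex_of_real (a k)"
abbreviation (input) \<beta> :: "nat \<Rightarrow> complex" where "\<beta> \<equiv> \<lambda>k. complex_of_real (b k)"

lemma jfrac_perturb_asymp_equiv:
  assumes F: "F \<le> at_infinity" and t: "t \<sim>[F] (\<lambda>z. complex_of_real (a (Suc n)) / z)"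
  shows "(\<lambda>z. jfrac \<alpha> \<beta> 0 n z (t z) - wapp a b n z)
      \<sim>[F] (\<lambda>z. complex_of_real (\<Prod>k=1..n+1. a k) / z ^ (2*n+1))"
proof -
  have "(t \<longlongrightarrow> 0) F"
    using t tendsto_divide_ident_0[OF F] asymp_equiv_tendsto_transfer asymp_equiv_sym by blast
  from jfrac_diff_asymp_equiv[OF F this tendsto_const, of \<alpha> \<beta> 0 n]
  have "(\<lambda>z. jfrac \<alpha> \<beta> 0 n z (t z) - wapp a b n z)
      \<sim>[F] (\<lambda>z. t z * (\<Prod>i<n. complex_of_real (a (Suc i))) / z ^ (2*n))"
    by (simp add: wapp_def)
  also have "\<dots> \<sim>[F] (\<lambda>z. complex_of_real (a (Suc n)) / z * (\<Prod>i<n. complex_of_real (a (Suc i))) / z ^ (2*n))"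
    by (intro asymp_equiv_intros t)
  also have "(\<lambda>z. complex_of_real (a (Suc n)) / z * (\<Prod>i<n. complex_of_real (a (Suc i))) / z ^ (2*n))
      = (\<lambda>z. complex_of_real (\<Prod>k=1..n+1. a k) / z ^ (2*n+1))"
    by (simp add: prod.atLeast1_atMost_eq of_real_prod field_simps)
  finally show ?thesis .
qed

lemma wapp_Suc_diff_asymp_equiv:
  assumes "F \<le> at_infinity"
  shows "(\<lambda>z. wapp a b (Suc n) z - wapp a b n z)
      \<sim>[F] (\<lambda>z. complex_of_real (\<Prod>k=1..n+1. a k) / z ^ (2*n+1))"
proof -
  have "wapp a b (Suc n) z = jfrac \<alpha> \<beta> 0 n z (jfrac \<alpha> \<beta> n (Suc 0) z 0)" for z
    using jfrac_add[of \<alpha> \<beta> 0 n "Suc 0" z 0] by (simp add: wapp_def)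
  then show ?thesis
    using jfrac_perturb_asymp_equiv[OF assms
        jfrac_Suc_asymp_equiv[where a=\<alpha> and b=\<beta> and k=n and n=0, OF assms tendsto_const]]
    by simp
qed

lemma wapp_Suc_diff_bigo:
  assumes "F \<le> at_infinity"
  shows "(\<lambda>z. wapp a b (Suc n) z - wapp a b n z) \<in> O[F](\<lambda>z. inverse (z ^ (2*n+1)))"
  using asymp_equiv_imp_bigo[OF wapp_Suc_diff_asymp_equiv[OF assms]] const_divide_power_bigo
  by (rule landau_o.big_trans)

lemma wapp_diff_bigo:
  assumes F: "F \<le> at_infinity" and "n \<le> m"
  shows "(\<lambda>z. wapp a b m z - wapp a b n z) \<in> O[F](\<lambda>z. inverse (z ^ (2*n+1)))"
  using assms(2)
proof (induction m rule: dec_induct)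
  case base
  show ?case
    by simp
next
  case (step m)
  have "(\<lambda>z. wapp a b (Suc m) z - wapp a b m z) \<in> O[F](\<lambda>z. inverse (z ^ (2*n+1)))"
    by (rule bigo_inverse_power_weaken[OF wapp_Suc_diff_bigo[OF F] _ F]) (use step(1) in simp)
  from sum_in_bigo(1)[OF this step(3)] show ?case
    by simp
qed

lemma infinite_bigo_wapp_iff:
  assumes F: "F \<le> at_infinity"
  shows "infinite {n. (\<lambda>z. f z - wapp a b n z) \<in> O[F](\<lambda>z. inverse (z ^ (2*n+1)))}
    \<longleftrightarrow> (\<forall>n. (\<lambda>z. f z - wapp a b n z) \<in> O[F](\<lambda>z. inverse (z ^ (2*n+1))))"
proof
  assume inf: "infinite {n. (\<lambda>z. f z - wapp a b n z) \<in> O[F](\<lambda>z. inverse (z ^ (2*n+1)))}"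
  show "\<forall>n. (\<lambda>z. f z - wapp a b n z) \<in> O[F](\<lambda>z. inverse (z ^ (2*n+1)))"
  proof
    fix n
    obtain N where N: "n \<le> N" "(\<lambda>z. f z - wapp a b N z) \<in> O[F](\<lambda>z. inverse (z ^ (2*N+1)))"
      using inf unfolding infinite_nat_iff_unbounded_le by blast
    have "(\<lambda>z. f z - wapp a b N z) \<in> O[F](\<lambda>z. inverse (z ^ (2*n+1)))"
      by (rule bigo_inverse_power_weaken[OF N(2) _ F]) (use N(1) in simp)
    from sum_in_bigo(1)[OF this wapp_diff_bigo[OF F N(1)]]
    show "(\<lambda>z. f z - wapp a b n z) \<in> O[F](\<lambda>z. inverse (z ^ (2*n+1)))"
      by simp
  qed
qed simp

lemma bigo_wapp_if_bigo_wapp_ge_1: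
  assumes "F \<le> at_infinity"
    and "\<And>n. n \<ge> 1 \<Longrightarrow> (\<lambda>z. f z - wapp a b n z) \<in> O[F](\<lambda>z. inverse (z ^ (2*n+1)))"
  shows "(\<lambda>z. f z - wapp a b n z) \<in> O[F](\<lambda>z. inverse (z ^ (2*n+1)))"
proof -
  have "{1..} \<subseteq> {n. (\<lambda>z. f z - wapp a b n z) \<in> O[F](\<lambda>z. inverse (z ^ (2*n+1)))}"
    using assms(2) by auto
  then have "infinite {n. (\<lambda>z. f z - wapp a b n z) \<in> O[F](\<lambda>z. inverse (z ^ (2*n+1)))}"
    using infinite_Ici infinite_super by blast
  then show ?thesis
    using infinite_bigo_wapp_iff[OF assms(1)] by blast
qed

lemma wapp_minus_partial_sum_bigo:
  fixes c :: "nat \<Rightarrow> complex"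
  assumes F: "F \<le> at_infinity"
    and approx: "\<And>n. n \<ge> 1 \<Longrightarrow>
       (\<lambda>z. wapp a b n z - (\<Sum>k\<le>2*n-1. c k / z ^ (k+1))) \<in> o[at_infinity](\<lambda>z. inverse (z ^ (2*n)))"
  shows "(\<lambda>z. wapp a b (Suc n) z - (\<Sum>k\<le>2*n+1. c k / z ^ (k+1))) \<in> O[F](\<lambda>z. inverse (z ^ (2*n+2)))"
proof -
  have "(\<lambda>z. wapp a b (Suc n) z - (\<Sum>k\<le>2*n+1. c k / z ^ (k+1))) \<in> o[at_infinity](\<lambda>z. inverse (z ^ (2*n+2)))"
    using approx[of "Suc n"] by simp
  then show ?thesis
    by (rule landau_o.small_imp_big[OF landau_o.small.filter_mono[OF F]])
qed

lemma asymp_series_iff_bigo_wapp: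
  fixes c :: "nat \<Rightarrow> complex"
  assumes F: "F \<le> at_infinity"
    and approx: "\<And>n. n \<ge> 1 \<Longrightarrow>
       (\<lambda>z. wapp a b n z - (\<Sum>k\<le>2*n-1. c k / z ^ (k+1))) \<in> o[at_infinity](\<lambda>z. inverse (z ^ (2*n)))"
  shows "asymp_series F f c \<longleftrightarrow> (\<forall>n. (\<lambda>z. f z - wapp a b n z) \<in> O[F](\<lambda>z. inverse (z ^ (2*n+1))))"
proof -
  define S where "S N z = (\<Sum>k\<le>N. c k / z ^ (k+1))" for N z
  have wS: "(\<lambda>z. wapp a b (Suc n) z - S (2*n+1) z) \<in> O[F](\<lambda>z. inverse (z ^ (2*n+2)))" for n
    unfolding S_def by (rule wapp_minus_partial_sum_bigo[OF F approx])
  have SS: "(\<lambda>z. S N z - S n z) \<in> O[F](\<lambda>z. inverse (z ^ (n+2)))" if "n \<le> N" for n N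
    unfolding S_def by (rule partial_sum_diff_bigo[OF F that])
  show ?thesis
    unfolding asymp_series_def S_def [symmetric]
  proof (intro iffI allI)
    fix n
    assume series: "\<forall>n. (\<lambda>z. f z - S n z) \<in> o[F](\<lambda>z. inverse (z ^ (n+1)))"
    have A: "(\<lambda>z. f z - S (2*n) z) \<in> O[F](\<lambda>z. inverse (z ^ (2*n+1)))"
      using series by (intro landau_o.small_imp_big) blast
    have B: "(\<lambda>z. S (2*n+1) z - S (2*n) z) \<in> O[F](\<lambda>z. inverse (z ^ (2*n+1)))"
      by (rule bigo_inverse_power_weaken[OF SS _ F]) simp_all
    have C: "(\<lambda>z. wapp a b (Suc n) z - S (2*n+1) z) \<in> O[F](\<lambda>z. inverse (z ^ (2*n+1)))"
      by (rule bigo_inverse_power_weaken[OF wS _ F]) simp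
    from sum_in_bigo(1)[OF sum_in_bigo(2)[OF sum_in_bigo(2)[OF A B] C] wapp_Suc_diff_bigo[OF F]]
    show "(\<lambda>z. f z - wapp a b n z) \<in> O[F](\<lambda>z. inverse (z ^ (2*n+1)))"
      by (simp add: algebra_simps)
  next
    fix n
    assume bigo: "\<forall>n. (\<lambda>z. f z - wapp a b n z) \<in> O[F](\<lambda>z. inverse (z ^ (2*n+1)))"
    have A: "(\<lambda>z. f z - wapp a b (Suc n) z) \<in> o[F](\<lambda>z. inverse (z ^ (n+1)))"
      by (rule bigo_inverse_power_imp_smallo[OF bigo[rule_format] _ F]) simp
    have B: "(\<lambda>z. wapp a b (Suc n) z - S (2*n+1) z) \<in> o[F](\<lambda>z. inverse (z ^ (n+1)))"
      by (rule bigo_inverse_power_imp_smallo[OF wS _ F]) simp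
    have C: "(\<lambda>z. S (2*n+1) z - S n z) \<in> o[F](\<lambda>z. inverse (z ^ (n+1)))"
      by (rule bigo_inverse_power_imp_smallo[OF SS _ F]) simp_all
    from sum_in_smallo(1)[OF sum_in_smallo(1)[OF A B] C]
    show "(\<lambda>z. f z - S n z) \<in> o[F](\<lambda>z. inverse (z ^ (n+1)))"
      by (simp add: algebra_simps)
  qed
qed

lemma const_prod_bigtheta:
  assumes "\<And>n. a (Suc n) \<noteq> 0"
  shows "(\<lambda>z. complex_of_real (\<Prod>k=1..n+1. a k) / z ^ m) \<in> \<Theta>[F](\<lambda>z. inverse (z ^ m))"
  using assms by (intro const_divide_power_bigtheta) (auto simp: prod_zero_iff dest!: Suc_le_D)

lemma asymp_equiv_iff_bigo_wapp:
  assumes F: "F \<le> at_infinity" and a: "\<And>n. a (Suc n) \<noteq> 0"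
  shows "(\<forall>n. (\<lambda>z. f z - wapp a b n z) \<sim>[F] (\<lambda>z. complex_of_real (\<Prod>k=1..n+1. a k) / z ^ (2*n+1)))
    \<longleftrightarrow> (\<forall>n. (\<lambda>z. f z - wapp a b n z) \<in> O[F](\<lambda>z. inverse (z ^ (2*n+1))))"
proof (intro iffI allI)
  fix n
  assume "\<forall>n. (\<lambda>z. f z - wapp a b n z) \<sim>[F] (\<lambda>z. complex_of_real (\<Prod>k=1..n+1. a k) / z ^ (2*n+1))"
  then show "(\<lambda>z. f z - wapp a b n z) \<in> O[F](\<lambda>z. inverse (z ^ (2*n+1)))"
    using landau_o.big_trans[OF asymp_equiv_imp_bigo const_divide_power_bigo] by blast
next
  fix n
  assume "\<forall>n. (\<lambda>z. f z - wapp a b n z) \<in> O[F](\<lambda>z. inverse (z ^ (2*n+1)))"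
  then have bigo: "(\<lambda>z. f z - wapp a b (Suc n) z) \<in> O[F](\<lambda>z. inverse (z ^ (2*Suc n+1)))"
    by blast
  have small: "(\<lambda>z. f z - wapp a b (Suc n) z) \<in> o[F](\<lambda>z. complex_of_real (\<Prod>k=1..n+1. a k) / z ^ (2*n+1))"
    by (rule smallo_if_bigo_inverse_power[OF _ F const_prod_bigtheta[OF a] bigo]) simp
  have "(\<lambda>z. (f z - wapp a b (Suc n) z) + (wapp a b (Suc n) z - wapp a b n z))
      \<sim>[F] (\<lambda>z. complex_of_real (\<Prod>k=1..n+1. a k) / z ^ (2*n+1))"
    by (simp only: asymp_equiv_add_left[OF small] wapp_Suc_diff_asymp_equiv[OF F])
  then show "(\<lambda>z. f z - wapp a b n z) \<sim>[F] (\<lambda>z. complex_of_real (\<Prod>k=1..n+1. a k) / z ^ (2*n+1))"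
    by simp
qed

lemma wapp_Suc_diff_bigtheta:
  assumes "F \<le> at_infinity" "\<And>n. a (Suc n) \<noteq> 0"
  shows "(\<lambda>z. wapp a b (Suc n) z - wapp a b n z) \<in> \<Theta>[F](\<lambda>z. inverse (z ^ (2*n+1)))"
  using asymp_equiv_imp_bigtheta[OF wapp_Suc_diff_asymp_equiv[OF assms(1)]] const_prod_bigtheta[OF assms(2)]
  by (rule landau_theta.trans)

lemma asymp_cf_iff_bigo_wapp:
  assumes F: "F \<le> at_infinity" and a: "\<And>n. a (Suc n) \<noteq> 0"
  shows "asymp_cf F f (wapp a b) \<longleftrightarrow> (\<forall>n. (\<lambda>z. f z - wapp a b n z) \<in> O[F](\<lambda>z. inverse (z ^ (2*n+1))))"
proof -
  note theta = wapp_Suc_diff_bigtheta[OF F a]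
  have "(\<lambda>z. wapp a b (Suc (Suc m)) z - wapp a b (Suc m) z) \<in> o[F](\<lambda>z. wapp a b (Suc m) z - wapp a b m z)" for m
    using smallo_if_bigo_inverse_power[OF _ F theta bigthetaD1[OF theta[of "Suc m"]]] by simp
  moreover have "(\<lambda>z. f z - wapp a b m z) \<in> O[F](\<lambda>z. wapp a b (Suc m) z - wapp a b m z)
      \<longleftrightarrow> (\<lambda>z. f z - wapp a b m z) \<in> O[F](\<lambda>z. inverse (z ^ (2*m+1)))" for m
    using landau_o.big.cong_bigtheta[OF theta[of m]] by simp
  ultimately show ?thesis
    unfolding asymp_cf_def by (simp add: numeral_2_eq_2)
qed

lemma jtail_asymp_equiv:
  assumes F: "F \<le> at_infinity" and a: "\<And>n. a (Suc n) \<noteq> 0"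
    and f: "(\<lambda>z. f z - wapp a b (Suc n) z) \<in> O[F](\<lambda>z. inverse (z ^ (2 * Suc n + 1)))"
  shows "(\<lambda>z. jtail \<alpha> \<beta> 0 n z (f z)) \<sim>[F] (\<lambda>z. complex_of_real (a (Suc n)) / z)"
proof -
  have "(\<lambda>z. f z - jfrac \<alpha> \<beta> 0 (n + Suc 0) z 0) \<in> O[F](\<lambda>z. inverse (z ^ (2*(n + Suc 0)+1)))"
    using f by (simp add: wapp_def)
  from jtail_bigo[OF F _ this]
  have tail: "(\<lambda>z. jtail \<alpha> \<beta> 0 n z (f z) - jfrac \<alpha> \<beta> n (Suc 0) z 0) \<in> O[F](\<lambda>z. inverse (z ^ 3))"
    using a by simp
  have J: "(\<lambda>z. jfrac \<alpha> \<beta> n (Suc 0) z 0) \<sim>[F] (\<lambda>z. complex_of_real (a (Suc n)) / z)"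
    by (rule jfrac_Suc_asymp_equiv[where a=\<alpha> and b=\<beta> and k=n and n=0, OF F tendsto_const])
  have "(\<lambda>z. complex_of_real (a (Suc n)) / z) \<in> \<Theta>[F](\<lambda>z. inverse (z ^ 1))"
    using const_divide_power_bigtheta[of "complex_of_real (a (Suc n))" 1] a by simp
  then have "(\<lambda>z. jfrac \<alpha> \<beta> n (Suc 0) z 0) \<in> \<Theta>[F](\<lambda>z. inverse (z ^ 1))"
    by (rule landau_theta.trans[OF asymp_equiv_imp_bigtheta[OF J]])
  from asymp_equiv_if_bigo_inverse_power[OF _ F this tail] show ?thesis
    using J by (simp add: asymp_equiv_trans)
qed

lemma bigo_wapp_if_jfrac_tail:
  assumes F: "F \<le> at_infinity"
    and f: "eventually (\<lambda>z. f z = jfrac \<alpha> \<beta> 0 n z (fn z)) F"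
    and fn: "fn \<sim>[F] (\<lambda>z. complex_of_real (a (Suc n)) / z)"
  shows "(\<lambda>z. f z - wapp a b n z) \<in> O[F](\<lambda>z. inverse (z ^ (2*n+1)))"
proof -
  have ev: "eventually (\<lambda>z. jfrac \<alpha> \<beta> 0 n z (fn z) - wapp a b n z = f z - wapp a b n z) F"
    using f by eventually_elim simp
  from jfrac_perturb_asymp_equiv[OF F fn]
  have "(\<lambda>z. jfrac \<alpha> \<beta> 0 n z (fn z) - wapp a b n z) \<in> O[F](\<lambda>z. inverse (z ^ (2*n+1)))"
    by (rule landau_o.big_trans[OF asymp_equiv_imp_bigo const_divide_power_bigo])
  then show ?thesis
    unfolding landau_o.big.in_cong[OF ev] .
qed

lemma jfrac_tail_iff_bigo_wapp:
  assumes a: "\<And>n. a (Suc n) \<noteq> 0"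
  shows "(\<forall>n\<ge>1. \<exists>fn. (\<forall>z\<in>X. f z = jfrac \<alpha> \<beta> 0 n z (fn z))
        \<and> fn \<sim>[at_inf_within X] (\<lambda>z. complex_of_real (a (n+1)) / z))
    \<longleftrightarrow> (\<forall>n. (\<lambda>z. f z - wapp a b n z) \<in> O[at_inf_within X](\<lambda>z. inverse (z ^ (2*n+1))))"
    (is "?tails \<longleftrightarrow> ?bigo")
proof
  assume ?bigo
  show ?tails
  proof (intro allI impI)
    fix n :: nat
    from jtail_asymp_equiv[OF _ a \<open>?bigo\<close>[rule_format, of "Suc n"]]
    have "(\<lambda>z. jtail \<alpha> \<beta> 0 n z (f z)) \<sim>[at_inf_within X] (\<lambda>z. complex_of_real (a (n+1)) / z)"
      by simp
    moreover have "\<forall>z. f z = jfrac \<alpha> \<beta> 0 n z (jtail \<alpha> \<beta> 0 n z (f z))"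
      using a by (simp add: jfrac_jtail)
    ultimately show "\<exists>fn. (\<forall>z\<in>X. f z = jfrac \<alpha> \<beta> 0 n z (fn z))
        \<and> fn \<sim>[at_inf_within X] (\<lambda>z. complex_of_real (a (n+1)) / z)"
      by (intro exI[of _ "\<lambda>z. jtail \<alpha> \<beta> 0 n z (f z)"]) simp
  qed
next
  assume tails: ?tails
  have "(\<lambda>z. f z - wapp a b n z) \<in> O[at_inf_within X](\<lambda>z. inverse (z ^ (2*n+1)))"
    if "n \<ge> 1" for n
  proof -
    from tails that obtain fn where "\<forall>z\<in>X. f z = jfrac \<alpha> \<beta> 0 n z (fn z)"
      "fn \<sim>[at_inf_within X] (\<lambda>z. complex_of_real (a (n+1)) / z)"
      by blast
    then show ?thesis
      by (intro bigo_wapp_if_jfrac_tail) (simp_all add: eventually_at_inf_within)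
  qed
  then show ?bigo
    using bigo_wapp_if_bigo_wapp_ge_1[OF at_inf_within_le_at_infinity] by blast
qed

lemma wrat_repr:
  obtains P Q where "wrat a b n = to_fract P / to_fract Q" "Q \<noteq> 0" "degree Q = n" "P = 0 \<or> degree P < n"
    "eventually (\<lambda>z. wapp a b n z = poly P z / poly Q z) at_infinity"
proof -
  obtain P Q where "wrat a b n = to_fract P / to_fract Q" "lead_coeff Q = 1" "degree Q = n"
      "P = 0 \<or> degree P < n" "eventually (\<lambda>z. wapp a b n z = poly P z / poly Q z) at_infinity"
    using jfrac_fract_repr[where \<alpha>=\<alpha> and \<beta>=\<beta> and k=0 and n=n] unfolding wrat_def wapp_def by blast
  moreover have "Q \<noteq> 0"
    using calculation(2) by auto
  ultimately show ?thesis
    using that by blast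
qed

lemma rdeg_wrat_le: "rdeg (wrat a b n) \<le> n"
proof -
  obtain P Q where "wrat a b n = to_fract P / to_fract Q" "Q \<noteq> 0" "degree Q = n" "P = 0 \<or> degree P < n"
    by (rule wrat_repr)
  from rdeg_reval_le(1)[OF this(2,1)] this(3,4) show ?thesis
    by auto
qed

lemma eventually_wapp_eq_reval: "eventually (\<lambda>z. wapp a b n z = reval (wrat a b n) z) at_infinity"
proof -
  obtain P Q where "wrat a b n = to_fract P / to_fract Q" "Q \<noteq> 0"
    "eventually (\<lambda>z. wapp a b n z = poly P z / poly Q z) at_infinity"
    by (rule wrat_repr)
  from this(3) eventually_poly_nonzero_at_infinity[OF this(2)] show ?thesis
    by eventually_elim (simp add: rdeg_reval_le(2)[OF \<open>Q \<noteq> 0\<close> \<open>wrat a b n = _\<close>])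
qed

lemma eventually_poly_divide_eq_wapp:
  assumes "to_fract g / to_fract h = wrat a b n" "h \<noteq> 0"
  shows "eventually (\<lambda>z. poly g z / poly h z = wapp a b n z) at_infinity"
  using eventually_wapp_eq_reval[of n] eventually_poly_nonzero_at_infinity[OF assms(2)]
  by eventually_elim (simp add: rdeg_reval_le(2)[OF assms(2) assms(1) [symmetric]])

lemma bigo_reval_iff_bigo_wapp:
  assumes "F \<le> at_infinity"
  shows "(\<lambda>z. f z - reval (wrat a b n) z) \<in> O[F](e) \<longleftrightarrow> (\<lambda>z. f z - wapp a b n z) \<in> O[F](e)"
  using filter_leD[OF assms eventually_wapp_eq_reval[of n]]
  by (intro landau_o.big.in_cong) (auto elim: eventually_mono)

lemma bigo_poly_divide_iff_bigo_wapp: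
  assumes "F \<le> at_infinity" "to_fract g / to_fract h = wrat a b n" "h \<noteq> 0"
  shows "(\<lambda>z. f z - poly g z / poly h z) \<in> O[F](e) \<longleftrightarrow> (\<lambda>z. f z - wapp a b n z) \<in> O[F](e)"
  using filter_leD[OF assms(1) eventually_poly_divide_eq_wapp[OF assms(2,3)]]
  by (intro landau_o.big.in_cong) (auto elim: eventually_mono)

lemma fract_eq_wrat_if_bigo:
  assumes F: "F \<le> at_infinity" "F \<noteq> bot"
    and fw: "(\<lambda>z. f z - wapp a b n z) \<in> O[F](\<lambda>z. inverse (z ^ (2*n+1)))"
    and h: "h \<noteq> 0" "degree h \<le> n"
    and fg: "(\<lambda>z. f z - poly g z / poly h z) \<in> O[F](\<lambda>z. inverse (z ^ (2*n+1)))"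
  shows "to_fract g / to_fract h = wrat a b n"
proof -
  obtain P Q where PQ: "wrat a b n = to_fract P / to_fract Q" "Q \<noteq> 0" "degree Q = n"
    by (rule wrat_repr)
  from fw have "(\<lambda>z. f z - poly P z / poly Q z) \<in> O[F](\<lambda>z. inverse (z ^ (2*n+1)))"
    by (simp add: bigo_poly_divide_iff_bigo_wapp[OF F(1) PQ(1) [symmetric] PQ(2)])
  from sum_in_bigo(2)[OF this fg]
  have "(\<lambda>z. poly g z / poly h z - poly P z / poly Q z) \<in> O[F](\<lambda>z. inverse (z ^ (2*n+1)))"
    by simp
  moreover have "degree h + degree Q \<le> 2 * n"
    using h(2) PQ(3) by simp
  ultimately have "g * Q = P * h"
    using poly_cross_eq_if_bigo[OF F h(1) PQ(2)] by blast
  then show ?thesis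
    using PQ(1,2) h(1) by (simp add: divide_to_fract_eq_iff)
qed

lemma unique_rational_approx_iff_bigo_wapp:
  assumes F: "F \<le> at_infinity" "F \<noteq> bot"
  shows "(\<forall>n. rdeg (wrat a b n) \<le> n
        \<and> (\<lambda>z. f z - reval (wrat a b n) z) \<in> O[F](\<lambda>z. inverse (z ^ (2*n+1)))
        \<and> (\<forall>r. rdeg r \<le> n \<and> (\<lambda>z. f z - reval r z) \<in> O[F](\<lambda>z. inverse (z ^ (2*n+1)))
              \<longrightarrow> r = wrat a b n))
    \<longleftrightarrow> (\<forall>n. (\<lambda>z. f z - wapp a b n z) \<in> O[F](\<lambda>z. inverse (z ^ (2*n+1))))"
proof -
  have unique: "r = wrat a b n"
    if fw: "(\<lambda>z. f z - wapp a b n z) \<in> O[F](\<lambda>z. inverse (z ^ (2*n+1)))"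
      and r: "rdeg r \<le> n" "(\<lambda>z. f z - reval r z) \<in> O[F](\<lambda>z. inverse (z ^ (2*n+1)))" for r n
  proof -
    obtain p q where pq: "q \<noteq> 0" "coprime p q" "r = to_fract p / to_fract q"
      using coprime_fract_repr_exists by blast
    then have "degree q \<le> n" "(\<lambda>z. f z - poly p z / poly q z) \<in> O[F](\<lambda>z. inverse (z ^ (2*n+1)))"
      using r rdeg_reval_coprime[OF pq] by simp_all
    from fract_eq_wrat_if_bigo[OF F fw pq(1) this] show ?thesis
      using pq(3) by simp
  qed
  show ?thesis
    unfolding bigo_reval_iff_bigo_wapp[OF F(1)]
  proof (intro iffI allI conjI impI)
    fix n r
    assume bigo: "\<forall>n. (\<lambda>z. f z - wapp a b n z) \<in> O[F](\<lambda>z. inverse (z ^ (2*n+1)))"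
    then show "(\<lambda>z. f z - wapp a b n z) \<in> O[F](\<lambda>z. inverse (z ^ (2*n+1)))"
      by blast
    assume "rdeg r \<le> n \<and> (\<lambda>z. f z - reval r z) \<in> O[F](\<lambda>z. inverse (z ^ (2*n+1)))"
    with bigo show "r = wrat a b n"
      using unique by blast
  qed (simp_all add: rdeg_wrat_le)
qed

lemma pade_iff_bigo_wapp:
  assumes F: "F \<le> at_infinity" "F \<noteq> bot"
  shows "(\<forall>n\<ge>1.
        (\<exists>g h :: complex poly. h \<noteq> 0 \<and> degree g \<le> n - 1 \<and> degree h \<le> n
          \<and> (\<lambda>z. f z - poly g z / poly h z) \<in> O[F](\<lambda>z. inverse (z ^ (2*n+1)))
          \<and> to_fract g / to_fract h = wrat a b n)
      \<and> (\<forall>g h :: complex poly. h \<noteq> 0 \<and> degree g \<le> n - 1 \<and> degree h \<le> n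
          \<and> (\<lambda>z. f z - poly g z / poly h z) \<in> O[F](\<lambda>z. inverse (z ^ (2*n+1)))
          \<longrightarrow> to_fract g / to_fract h = wrat a b n))
    \<longleftrightarrow> (\<forall>n. (\<lambda>z. f z - wapp a b n z) \<in> O[F](\<lambda>z. inverse (z ^ (2*n+1))))"
    (is "?pade \<longleftrightarrow> ?bigo")
proof
  assume pade: ?pade
  have "(\<lambda>z. f z - wapp a b n z) \<in> O[F](\<lambda>z. inverse (z ^ (2*n+1)))" if n: "n \<ge> 1" for n
  proof -
    obtain g h where gh: "h \<noteq> 0" "(\<lambda>z. f z - poly g z / poly h z) \<in> O[F](\<lambda>z. inverse (z ^ (2*n+1)))"
      "to_fract g / to_fract h = wrat a b n"
      using conjunct1[OF pade[rule_format, OF n]] by blast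
    from gh(2) show ?thesis
      unfolding bigo_poly_divide_iff_bigo_wapp[OF F(1) gh(3,1)] .
  qed
  then show ?bigo
    using bigo_wapp_if_bigo_wapp_ge_1[OF F(1)] by blast
next
  assume bigo: ?bigo
  have "\<exists>g h :: complex poly. h \<noteq> 0 \<and> degree g \<le> n - 1 \<and> degree h \<le> n
      \<and> (\<lambda>z. f z - poly g z / poly h z) \<in> O[F](\<lambda>z. inverse (z ^ (2*n+1)))
      \<and> to_fract g / to_fract h = wrat a b n" if "n \<ge> 1" for n
  proof -
    obtain P Q where PQ: "wrat a b n = to_fract P / to_fract Q" "Q \<noteq> 0" "degree Q = n"
      "P = 0 \<or> degree P < n"
      by (rule wrat_repr)
    have "(\<lambda>z. f z - poly P z / poly Q z) \<in> O[F](\<lambda>z. inverse (z ^ (2*n+1)))"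
      using bigo[rule_format, of n] unfolding bigo_poly_divide_iff_bigo_wapp[OF F(1) PQ(1) [symmetric] PQ(2)] .
    moreover have "degree P \<le> n - 1"
      using PQ(4) that by auto
    ultimately show ?thesis
      using PQ(1-3) by (intro exI[of _ P] exI[of _ Q]) simp
  qed
  then show ?pade
    using fract_eq_wrat_if_bigo[OF F bigo[rule_format]] by (intro allI impI conjI) auto
qed

end

section \<open>The Stieltjes transform\<close>

lemma geometric_remainder:
  fixes z w :: "'a::field"
  assumes "z \<noteq> 0" "z \<noteq> w"
  shows "1 / (z - w) - (\<Sum>k\<le>n. w ^ k / z ^ (k+1)) = w ^ (n+1) / (z ^ (n+1) * (z - w))"
proof (induction n)
  case 0
  show ?case
    using assms by (simp add: field_simps)
next
  case (Suc n)
  have "1 / (z - w) - (\<Sum>k\<le>Suc n. w ^ k / z ^ (k+1))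
      = w ^ (n+1) / (z ^ (n+1) * (z - w)) - w ^ Suc n / z ^ (Suc n + 1)"
    using Suc by simp
  also have "\<dots> = w ^ (Suc n + 1) / (z ^ (Suc n + 1) * (z - w))"
    using assms by (simp add: field_simps)
  finally show ?case .
qed

lemma sin_ge_min_on_interval:
  fixes \<delta> \<epsilon> \<theta> :: real
  assumes "\<delta> > 0" "\<epsilon> > 0" "\<delta> \<le> \<theta>" "\<theta> \<le> pi - \<epsilon>"
  shows "min (sin (min \<delta> (pi/2))) (sin (min \<epsilon> (pi/2))) \<le> sin \<theta>"
proof (cases "\<theta> \<le> pi/2")
  case True
  then have "sin \<delta> \<le> sin \<theta>"
    using assms by (subst sin_mono_le_eq) auto
  then show ?thesis
    using True assms(3) by (simp add: min_def)
next
  case False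
  then have "sin \<epsilon> \<le> sin (pi - \<theta>)"
    using assms by (subst sin_mono_le_eq) auto
  then show ?thesis
    using False assms(4) by (simp add: min_def)
qed

lemma sector_Im_lower_bound:
  fixes \<delta> \<epsilon> :: real
  assumes "\<delta> > 0" "\<epsilon> > 0"
  obtains \<kappa> where "\<kappa> > 0" "\<And>z. \<delta> \<le> \<bar>Arg z\<bar> \<Longrightarrow> \<bar>Arg z\<bar> \<le> pi - \<epsilon> \<Longrightarrow> \<kappa> * cmod z \<le> \<bar>Im z\<bar>"
proof
  show "min (sin (min \<delta> (pi/2))) (sin (min \<epsilon> (pi/2))) > 0"
    using assms by (auto intro!: sin_gt_zero simp: min_less_iff_disj)
next
  fix z :: complex
  assume z: "\<delta> \<le> \<bar>Arg z\<bar>" "\<bar>Arg z\<bar> \<le> pi - \<epsilon>"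
  then have "z \<noteq> 0"
    using assms(1) by (auto simp: Arg_zero)
  have "\<bar>sin (Arg z)\<bar> = sin \<bar>Arg z\<bar>"
    using sin_ge_zero[of "\<bar>Arg z\<bar>"] Arg_bounded[of z] by (cases "Arg z \<ge> 0") auto
  then have "\<bar>Im z\<bar> = cmod z * sin \<bar>Arg z\<bar>"
    using sin_Arg[OF \<open>z \<noteq> 0\<close>] \<open>z \<noteq> 0\<close> by (simp add: field_simps abs_mult)
  then show "min (sin (min \<delta> (pi/2))) (sin (min \<epsilon> (pi/2))) * cmod z \<le> \<bar>Im z\<bar>"
    using sin_ge_min_on_interval[OF assms z] by (simp add: mult.commute mult_left_mono)
qed

lemma stieltjes_minus_partial_sum:
  fixes \<mu> :: "real measure"
  assumes sets: "sets \<mu> = sets borel" and moments: "\<And>k. integrable \<mu> (\<lambda>t. t ^ k)"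
    and Im: "Im z \<noteq> 0"
  shows "stieltjes \<mu> z - (\<Sum>k\<le>n. complex_of_real (moment \<mu> k) / z ^ (k+1))
    = (LINT t|\<mu>. complex_of_real (t ^ (n+1)) / (z ^ (n+1) * (z - complex_of_real t)))"
proof -
  have Im_le: "\<bar>Im z\<bar> \<le> cmod (z - complex_of_real t)" for t
    using abs_Im_le_cmod[of "z - complex_of_real t"] by simp
  have "(\<lambda>t. 1 / (z - complex_of_real t)) \<in> borel_measurable borel"
    by measurable
  then have meas: "(\<lambda>t. 1 / (z - complex_of_real t)) \<in> borel_measurable \<mu>"
    by (simp only: measurable_cong_sets[OF sets refl])
  have int: "integrable \<mu> (\<lambda>t. 1 / (z - complex_of_real t))"
  proof (rule Bochner_Integration.integrable_bound[OF _ meas])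
    show "integrable \<mu> (\<lambda>t. 1 / \<bar>Im z\<bar> * t ^ 0)"
      using moments by (rule integrable_mult_right)
    show "AE t in \<mu>. norm (1 / (z - complex_of_real t)) \<le> norm (1 / \<bar>Im z\<bar> * t ^ 0)"
      using Im Im_le by (intro AE_I2) (simp add: norm_divide frac_le)
  qed
  have int_k: "integrable \<mu> (\<lambda>t. complex_of_real (t ^ k) / z ^ (k+1))" for k
    by (intro integrable_divide integrable_of_real moments)
  have moment: "complex_of_real (moment \<mu> k) / z ^ (k+1) = (LINT t|\<mu>. complex_of_real (t ^ k) / z ^ (k+1))"
    for k
    by (simp only: moment_def integral_divide_zero integral_complex_of_real)
  have remainder: "1 / (z - complex_of_real t) - (\<Sum>k\<le>n. complex_of_real (t ^ k) / z ^ (k+1))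
      = complex_of_real (t ^ (n+1)) / (z ^ (n+1) * (z - complex_of_real t))" for t
  proof -
    have "z \<noteq> 0" "z \<noteq> complex_of_real t"
      using Im by auto
    from geometric_remainder[OF this, of n] show ?thesis
      by (simp only: of_real_power)
  qed
  have "stieltjes \<mu> z - (\<Sum>k\<le>n. complex_of_real (moment \<mu> k) / z ^ (k+1))
      = (LINT t|\<mu>. 1 / (z - complex_of_real t))
        - integral\<^sup>L \<mu> (\<lambda>t. \<Sum>k\<le>n. complex_of_real (t ^ k) / z ^ (k+1))"
    unfolding stieltjes_def moment using int_k by (simp add: Bochner_Integration.integral_sum)
  also have "\<dots> = integral\<^sup>L \<mu> (\<lambda>t. 1 / (z - complex_of_real t) - (\<Sum>k\<le>n. complex_of_real (t ^ k) / z ^ (k+1)))"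
    using int int_k by (simp add: Bochner_Integration.integral_diff)
  finally show ?thesis
    by (simp only: remainder)
qed

lemma norm_stieltjes_minus_partial_sum_le:
  fixes \<mu> :: "real measure"
  assumes sets: "sets \<mu> = sets borel" and moments: "\<And>k. integrable \<mu> (\<lambda>t. t ^ k)"
    and Im: "Im z \<noteq> 0"
  shows "norm (stieltjes \<mu> z - (\<Sum>k\<le>n. complex_of_real (moment \<mu> k) / z ^ (k+1)))
    \<le> (LINT t|\<mu>. \<bar>t ^ (n+1)\<bar>) / (cmod z ^ (n+1) * \<bar>Im z\<bar>)"
proof -
  define r where "r t = complex_of_real (t ^ (n+1)) / (z ^ (n+1) * (z - complex_of_real t))" for t
  have "z \<noteq> 0"
    using Im by auto
  have norm_r: "norm (r t) \<le> \<bar>t ^ (n+1)\<bar> / (cmod z ^ (n+1) * \<bar>Im z\<bar>)" for t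
  proof -
    have "\<bar>Im z\<bar> \<le> cmod (z - complex_of_real t)"
      using abs_Im_le_cmod[of "z - complex_of_real t"] by simp
    moreover have "0 < \<bar>Im z\<bar>"
      using Im by simp
    ultimately have pos: "0 < \<bar>Im z\<bar>" "0 < cmod (z - complex_of_real t)" "0 < cmod z ^ (n+1)"
      using \<open>z \<noteq> 0\<close> by auto
    have "norm (r t) = \<bar>t ^ (n+1)\<bar> / (cmod z ^ (n+1) * cmod (z - complex_of_real t))"
      by (simp only: r_def norm_divide norm_mult norm_power norm_of_real)
    also have "\<dots> \<le> \<bar>t ^ (n+1)\<bar> / (cmod z ^ (n+1) * \<bar>Im z\<bar>)"
      using pos \<open>\<bar>Im z\<bar> \<le> _\<close> by (intro divide_left_mono mult_left_mono mult_pos_pos) auto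
    finally show ?thesis .
  qed
  have int_bound: "integrable \<mu> (\<lambda>t. \<bar>t ^ (n+1)\<bar> / (cmod z ^ (n+1) * \<bar>Im z\<bar>))"
    using moments by (intro integrable_divide integrable_abs)
  have "integrable \<mu> r"
  proof (rule Bochner_Integration.integrable_bound[OF int_bound])
    show "r \<in> borel_measurable \<mu>"
      unfolding r_def measurable_cong_sets[OF sets refl] by measurable
    show "AE t in \<mu>. norm (r t) \<le> norm (\<bar>t ^ (n+1)\<bar> / (cmod z ^ (n+1) * \<bar>Im z\<bar>))"
      using norm_r by (intro AE_I2) (simp add: abs_mult)
  qed
  have "norm (LINT t|\<mu>. r t) \<le> (LINT t|\<mu>. norm (r t))"
    by (rule integral_norm_bound)
  also have "\<dots> \<le> (LINT t|\<mu>. \<bar>t ^ (n+1)\<bar> / (cmod z ^ (n+1) * \<bar>Im z\<bar>))"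
    using integrable_norm[OF \<open>integrable \<mu> r\<close>] int_bound norm_r by (rule integral_mono)
  also have "\<dots> = (LINT t|\<mu>. \<bar>t ^ (n+1)\<bar>) / (cmod z ^ (n+1) * \<bar>Im z\<bar>)"
    by (rule integral_divide_zero)
  finally show ?thesis
    using stieltjes_minus_partial_sum[OF sets moments Im] by (simp add: r_def)
qed

lemma asymp_series_stieltjes:
  fixes \<mu> :: "real measure"
  assumes sets: "sets \<mu> = sets borel" and moments: "\<And>k. integrable \<mu> (\<lambda>t. t ^ k)"
    and \<kappa>: "\<kappa> > 0" "\<And>z. z \<in> X \<Longrightarrow> \<kappa> * cmod z \<le> \<bar>Im z\<bar>"
  shows "asymp_series (at_inf_within X) (stieltjes \<mu>) (\<lambda>k. complex_of_real (moment \<mu> k))"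
  unfolding asymp_series_def
proof
  fix n
  define C where "C = (LINT t|\<mu>. \<bar>t ^ (n+1)\<bar>) / \<kappa>"
  have "eventually (\<lambda>z. z \<in> X \<longrightarrow> norm (stieltjes \<mu> z - (\<Sum>k\<le>n. complex_of_real (moment \<mu> k) / z ^ (k+1)))
      \<le> C * norm (inverse (z ^ (n+2)))) at_infinity"
    using eventually_nonzero_le_at_infinity[OF order_refl]
  proof eventually_elim
    case (elim z)
    show ?case
    proof
      assume "z \<in> X"
      have "0 < \<kappa> * cmod z"
        using \<kappa>(1) elim by simp
      moreover have "\<kappa> * cmod z \<le> \<bar>Im z\<bar>"
        using \<kappa>(2) \<open>z \<in> X\<close> .
      ultimately have Im: "\<kappa> * cmod z \<le> \<bar>Im z\<bar>" "Im z \<noteq> 0"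
        by auto
      have "(LINT t|\<mu>. \<bar>t ^ (n+1)\<bar>) / (cmod z ^ (n+1) * \<bar>Im z\<bar>)
          \<le> (LINT t|\<mu>. \<bar>t ^ (n+1)\<bar>) / (cmod z ^ (n+1) * (\<kappa> * cmod z))"
        using Im \<kappa>(1) elim by (intro divide_left_mono mult_left_mono) auto
      also have "\<dots> = C * inverse (cmod z ^ (n+2))"
        using \<kappa>(1) elim by (simp add: C_def field_simps)
      also have "\<dots> = C * norm (inverse (z ^ (n+2)))"
        by (simp only: norm_inverse norm_power)
      finally show "norm (stieltjes \<mu> z - (\<Sum>k\<le>n. complex_of_real (moment \<mu> k) / z ^ (k+1)))
          \<le> C * norm (inverse (z ^ (n+2)))"
        by (rule order_trans[OF norm_stieltjes_minus_partial_sum_le[OF sets moments Im(2)]])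
    qed
  qed
  then have "(\<lambda>z. stieltjes \<mu> z - (\<Sum>k\<le>n. complex_of_real (moment \<mu> k) / z ^ (k+1)))
      \<in> O[at_inf_within X](\<lambda>z. inverse (z ^ (n+2)))"
    by (intro bigoI) (simp add: eventually_at_inf_within)
  then show "(\<lambda>z. stieltjes \<mu> z - (\<Sum>k\<le>n. complex_of_real (moment \<mu> k) / z ^ (k+1)))
      \<in> o[at_inf_within X](\<lambda>z. inverse (z ^ (n+1)))"
    by (rule bigo_inverse_power_imp_smallo) simp_all
qed

theorem theorem4p6:
  fixes \<mu> :: "real measure" and a b :: "nat \<Rightarrow> real"
  assumes sets_mu: "sets \<mu> = sets borel"
    and supp: "infinite (msupport \<mu>)"
    and moments: "\<And>k. integrable \<mu> (\<lambda>t. t ^ k)"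
    and a_pos: "\<And>n. n \<ge> 1 \<Longrightarrow> a n > 0"
    and approx: "\<And>n. n \<ge> 1 \<Longrightarrow>
       (\<lambda>z. wapp a b n z - (\<Sum>k\<le>2*n-1. complex_of_real (moment \<mu> k) / z ^ (k+1)))
         \<in> o[at_infinity](\<lambda>z. inverse (z ^ (2*n)))"
  shows
   "(\<forall>(X :: complex set) (f :: complex \<Rightarrow> complex). \<not> bounded X \<longrightarrow>
      (let F = at_inf_within X;
           P1 = asymp_series F f (\<lambda>k. complex_of_real (moment \<mu> k));
           P2 = asymp_cf F f (wapp a b);
           P3 = (\<forall>n\<ge>1. \<exists>fn :: complex \<Rightarrow> complex.
                   (\<forall>z\<in>X. f z = jfrac (\<lambda>k. complex_of_real (a k)) (\<lambda>k. complex_of_real (b k)) 0 n z (fn z))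
                   \<and> fn \<sim>[F] (\<lambda>z. complex_of_real (a (n+1)) / z));
           P4 = (\<forall>n. (\<lambda>z. f z - wapp a b n z) \<sim>[F]
                     (\<lambda>z. complex_of_real (\<Prod>k=1..n+1. a k) / z ^ (2*n+1)));
           P5 = (\<forall>n. (\<lambda>z. f z - wapp a b n z) \<in> O[F](\<lambda>z. inverse (z ^ (2*n+1))));
           P6 = infinite {n. (\<lambda>z. f z - wapp a b n z) \<in> O[F](\<lambda>z. inverse (z ^ (2*n+1)))};
           P7 = (\<forall>n. rdeg (wrat a b n) \<le> n
                   \<and> (\<lambda>z. f z - reval (wrat a b n) z) \<in> O[F](\<lambda>z. inverse (z ^ (2*n+1)))
                   \<and> (\<forall>r. rdeg r \<le> n \<and> (\<lambda>z. f z - reval r z) \<in> O[F](\<lambda>z. inverse (z ^ (2*n+1)))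
                          \<longrightarrow> r = wrat a b n));
           P8 = (\<forall>n\<ge>1.
                   (\<exists>g h :: complex poly. h \<noteq> 0 \<and> degree g \<le> n - 1 \<and> degree h \<le> n
                      \<and> (\<lambda>z. f z - poly g z / poly h z) \<in> O[F](\<lambda>z. inverse (z ^ (2*n+1)))
                      \<and> to_fract g / to_fract h = wrat a b n)
                 \<and> (\<forall>g h :: complex poly. h \<noteq> 0 \<and> degree g \<le> n - 1 \<and> degree h \<le> n
                      \<and> (\<lambda>z. f z - poly g z / poly h z) \<in> O[F](\<lambda>z. inverse (z ^ (2*n+1)))
                      \<longrightarrow> to_fract g / to_fract h = wrat a b n))
       in (P1 \<longleftrightarrow> P2) \<and> (P2 \<longleftrightarrow> P3) \<and> (P3 \<longleftrightarrow> P4) \<and> (P4 \<longleftrightarrow> P5)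
          \<and> (P5 \<longleftrightarrow> P6) \<and> (P6 \<longleftrightarrow> P7) \<and> (P7 \<longleftrightarrow> P8)))
    \<and> (\<forall>\<delta> \<epsilon> :: real. \<delta> > 0 \<and> \<epsilon> > 0 \<longrightarrow>
         asymp_cf (at_inf_within {z. \<delta> \<le> \<bar>Arg z\<bar> \<and> \<bar>Arg z\<bar> \<le> pi - \<epsilon>}) (stieltjes \<mu>) (wapp a b))"
proof -
  \<comment> \<open>The infinite support of \<mu> only guarantees that a and b exist; here they are given.\<close>
  have a: "a (Suc n) \<noteq> 0" for n
    using a_pos[of "Suc n"] by simp
  have stieltjes_bigo: "\<forall>n. (\<lambda>z. stieltjes \<mu> z - wapp a b n z)
      \<in> O[at_inf_within {z. \<delta> \<le> \<bar>Arg z\<bar> \<and> \<bar>Arg z\<bar> \<le> pi - \<epsilon>}](\<lambda>z. inverse (z ^ (2*n+1)))"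
    if pos: "\<delta> > 0 \<and> \<epsilon> > 0" for \<delta> \<epsilon> :: real
  proof -
    from pos have "\<delta> > 0" "\<epsilon> > 0"
      by simp_all
    obtain \<kappa> where "\<kappa> > 0" "\<And>z. \<delta> \<le> \<bar>Arg z\<bar> \<Longrightarrow> \<bar>Arg z\<bar> \<le> pi - \<epsilon> \<Longrightarrow> \<kappa> * cmod z \<le> \<bar>Im z\<bar>"
      using sector_Im_lower_bound[OF \<open>\<delta> > 0\<close> \<open>\<epsilon> > 0\<close>] by blast
    then have "asymp_series (at_inf_within {z. \<delta> \<le> \<bar>Arg z\<bar> \<and> \<bar>Arg z\<bar> \<le> pi - \<epsilon>}) (stieltjes \<mu>)
        (\<lambda>k. complex_of_real (moment \<mu> k))"
      by (intro asymp_series_stieltjes[OF sets_mu moments]) auto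
    then show ?thesis
      using asymp_series_iff_bigo_wapp[OF at_inf_within_le_at_infinity approx] by blast
  qed
  show ?thesis
    unfolding Let_def
    by (intro conjI allI impI; simp only: asymp_series_iff_bigo_wapp[OF _ approx]
        asymp_cf_iff_bigo_wapp[where a=a, OF _ a] jfrac_tail_iff_bigo_wapp[where a=a, OF a]
        asymp_equiv_iff_bigo_wapp[where a=a, OF _ a] infinite_bigo_wapp_iff
        unique_rational_approx_iff_bigo_wapp pade_iff_bigo_wapp stieltjes_bigo
        at_inf_within_le_at_infinity at_inf_within_eq_bot_iff simp_thms)
qed

end
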